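(* Let $d$, $n$, $r$ be positive integers with $\gcd(d,n)=1$ and $n$ odd. Let $s$ be an integer with $0\leqslant s\leqslant n-1$ and $s\equiv \langle -r/d\rangle_n+1\pmod 2$. Then $$ \sum_{k=s}^{n-1}\frac{(aq^r;q^d)_k\,(bq^{d-r};q^d)_k\,(q^d;q^{2d})_k\, q^{dk}}{(q^d;q^d)_{k-s}\,(q^d;q^d)_{k+s}\,(abq^{2d};q^{2d})_k} \equiv 0 \pmod{(1-aq^{r+d\langle -r/d\rangle_n})(1-bq^{d-r+d\langle (r-d)/d\rangle_n})}. $$
   Context: $a,b,q$ are indeterminates. The $q$-shifted factorial is $(x;q)_0=1$ and $(x;q)_m=(1-x)(1-xq)\cdots(1-xq^{m-1})$ for $m\geqslant1$. For a rational number $x$ and a positive integer $m$ such that the denominator of $x$ is coprime to $m$, $\langle x\rangle_m$ denotes the least non-negative residue of $x$ modulo $m$. For rational functions $A,B$ and a polynomial $P$ (in the indeterminates involved), $A\equiv B\pmod P$ means that $A-B=P\cdot C/D$ for polynomials $C,D$ with $D$ coprime to $P$. *)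

theory Defs
  imports "HOL-Computational_Algebra.Polynomial" "HOL-Computational_Algebra.Fraction_Field"
    "HOL-Number_Theory.Cong"
begin

text \<open>Polynomials in three indeterminates a, b, q over the rationals, realised as
  nested univariate polynomials; rational functions are their fraction field.\<close>

type_synonym mpoly3 = "rat poly poly poly"
type_synonym rfun3 = "mpoly3 fract"

definition emb :: "mpoly3 \<Rightarrow> rfun3" where "emb p = Fract p 1"

definition var_a :: rfun3 where "var_a = emb [:0, 1:]"
definition var_b :: rfun3 where "var_b = emb [:[:0, 1:]:]"
definition var_q :: rfun3 where "var_q = emb [:[:[:0, 1:]:]:]"

definition qpoch :: "rfun3 \<Rightarrow> rfun3 \<Rightarrow> nat \<Rightarrow> rfun3" where
  "qpoch x y m = (\<Prod>j<m. (1 - x * y ^ j))"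

text \<open>least non-negative residue of a rational x modulo m (denominator coprime to m)\<close>
definition lres :: "rat \<Rightarrow> nat \<Rightarrow> int" where
  "lres x m = (case quotient_of x of (p, e) \<Rightarrow>
      (THE t. 0 \<le> t \<and> t < int m \<and> [e * t = p] (mod int m)))"

text \<open>A \<equiv> B (mod P): A - B = P * C / D with polynomials C, D, D coprime to P.
  P is allowed to be a rational function written as N/M with N, M polynomials;
  D must be coprime to the numerator N (for P a polynomial this is the usual notion).\<close>
definition rcong :: "rfun3 \<Rightarrow> rfun3 \<Rightarrow> rfun3 \<Rightarrow> bool" where
  "rcong A B P \<longleftrightarrow> (\<exists>C D N M. M \<noteq> 0 \<and> D \<noteq> 0 \<and> P = emb N / emb M \<and> coprime D N \<and>
      A - B = P * emb C / emb D)"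

end

theory Submission
  imports Defs "HOL-Computational_Algebra.Polynomial_Factorial" "HOL-Computational_Algebra.Field_as_Ring"
begin

text \<open>Put \<open>Q = q\<^sup>d\<close>, \<open>A = a q\<^sup>r\<close>, \<open>B = b q\<^sup>d\<^sup>-\<^sup>r\<close>; the sum becomes a sum \<open>\<Sum>\<^sub>j T\<^sub>B(j)\<close> symmetric in \<open>A\<close>, \<open>B\<close>.
  If \<open>B = Q\<^sup>-\<^sup>m\<close> with \<open>s \<le> m < n\<close> and \<open>m - s\<close> odd, the sum vanishes: for \<open>m = s + 1\<close> only two
  terms survive and they cancel, and a creative telescoping recurrence
  \<open>\<rho> T\<^sub>B\<^sub>/\<^sub>Q\<^sub>\<^sup>2(j) - T\<^sub>B(j) = H(j + 1) - H(j)\<close>, whose certificate \<open>H\<close> vanishes at both ends of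
  the range, carries the vanishing from \<open>m\<close> to \<open>m + 2\<close>. The choice \<open>a = q\<^sup>-\<^sup>r\<^sup>-\<^sup>d\<^sup>L\<^sub>1\<close> with
  \<open>L\<^sub>1 = \<langle>-r/d\<rangle>\<^sub>n\<close> gives \<open>A = Q\<^sup>-\<^sup>L\<^sub>1\<close>, and \<open>b = q\<^sup>-\<^sup>(\<^sup>d\<^sup>-\<^sup>r\<^sup>)\<^sup>-\<^sup>d\<^sup>L\<^sub>2\<close> with
  \<open>L\<^sub>2 = \<langle>(r-d)/d\<rangle>\<^sub>n\<close> gives \<open>B = Q\<^sup>-\<^sup>L\<^sub>2\<close>; since \<open>L\<^sub>1 + L\<^sub>2 = n - 1\<close> is even, both have the
  required parity. So the rational function vanishes under both substitutions. Their kernels are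
  generated by the non-associate primes \<open>1 - a q\<^sup>\<alpha>\<close> and (the numerator of) \<open>1 - b q\<^sup>\<beta>\<close>, hence the
  numerator of the reduced fraction is divisible by their product and its denominator is coprime
  to it.\<close>

section \<open>The terminating sum\<close>

definition qpochhammer :: "'a::comm_ring_1 \<Rightarrow> 'a \<Rightarrow> nat \<Rightarrow> 'a" where
  "qpochhammer x y m = (\<Prod>j<m. 1 - x * y ^ j)"

lemma qpoch_eq_qpochhammer: "qpoch = qpochhammer"
  by (intro ext) (simp add: qpoch_def qpochhammer_def)

lemma qpochhammer_0 [simp]: "qpochhammer x y 0 = 1"
  by (simp add: qpochhammer_def)

lemma qpochhammer_Suc: "qpochhammer x y (Suc m) = qpochhammer x y m * (1 - x * y ^ m)"
  by (simp add: qpochhammer_def)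

lemma qpochhammer_Suc_shift: "qpochhammer x y (Suc m) = (1 - x) * qpochhammer (x * y) y m"
  unfolding qpochhammer_def prod.lessThan_Suc_shift by (simp add: mult.assoc)

lemma qpochhammer_eq_0: "i < m \<Longrightarrow> x * y ^ i = 1 \<Longrightarrow> qpochhammer x y m = 0"
  unfolding qpochhammer_def by (rule prod_zero) auto

lemma qpochhammer_nonzero:
  fixes x y :: "'a::idom"
  shows "(\<And>i. i < m \<Longrightarrow> x * y ^ i \<noteq> 1) \<Longrightarrow> qpochhammer x y m \<noteq> 0"
  unfolding qpochhammer_def by (subst prod_zero_iff) auto

definition qsum :: "'a::field \<Rightarrow> 'a \<Rightarrow> 'a \<Rightarrow> nat \<Rightarrow> nat \<Rightarrow> 'a" where
  "qsum A B Q s n = (\<Sum>k=s..n-1.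
     qpochhammer A Q k * qpochhammer B Q k * qpochhammer Q (Q^2) k * Q^k
     / (qpochhammer Q Q (k - s) * qpochhammer Q Q (k + s) * qpochhammer (A * B * Q) (Q^2) k))"

definition qsum_term :: "'a::field \<Rightarrow> 'a \<Rightarrow> 'a \<Rightarrow> nat \<Rightarrow> nat \<Rightarrow> 'a" where
  "qsum_term A B Q s j =
     qpochhammer A Q (s+j) * qpochhammer B Q (s+j) * qpochhammer Q (Q^2) (s+j) * Q^(s+j)
     / (qpochhammer Q Q j * qpochhammer Q Q (2*s+j) * qpochhammer (A * B * Q) (Q^2) (s+j))"

lemma qsum_commute: "qsum A B Q s n = qsum B A Q s n"
  by (simp add: qsum_def mult_ac)

lemma qsum_eq_sum_qsum_term:
  assumes "s < n"
  shows "qsum A B Q s n = (\<Sum>j<n-s. qsum_term A B Q s j)"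
proof -
  have "{s..n-1} = (\<lambda>j. s + j) ` {..<n-s}"
  proof -
    have "k \<in> (\<lambda>j. s + j) ` {..<n-s}" if "k \<in> {s..n-1}" for k
      using that assms by (intro image_eqI[of _ _ "k - s"]) auto
    then show ?thesis using assms by auto
  qed
  then show ?thesis
    unfolding qsum_def qsum_term_def
    by (simp add: sum.reindex inj_on_def mult_2 add_ac)
qed

lemma qsum_term_ratio:
  fixes A B Q :: "'a::field" and s j :: nat
  defines "U \<equiv> Q^(s+j)"
  assumes "qpochhammer Q Q (Suc j) \<noteq> 0" "qpochhammer Q Q (2*s + Suc j) \<noteq> 0"
    "qpochhammer (A * B * Q) (Q^2) (Suc (s+j)) \<noteq> 0"
  shows "qsum_term A B Q s (Suc j) = qsum_term A B Q s j
    * ((1 - A*U) * (1 - B*U) * (1 - Q*U^2) * Q / ((1 - Q^Suc j) * (1 - Q*Q^(2*s+j)) * (1 - A*B*Q*U^2)))"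
proof -
  have "(Q^2)^(s+j) = U^2" unfolding U_def by (simp add: power_mult_distrib[symmetric] power_mult[symmetric] mult.commute)
  with assms show ?thesis unfolding qsum_term_def
    by (simp add: qpochhammer_Suc U_def field_simps)
qed

text \<open>After cancelling common factors, \<open>qsum_term_telescoping\<close> below is this identity in
  \<open>U = Q\<^sup>s\<^sup>+\<^sup>j\<close> and \<open>S = Q\<^sup>s\<close>; multiplied out it is a polynomial identity.\<close>

lemma certificate_identity:
  fixes A M Q S U :: "'a::field"
  assumes Q: "Q \<noteq> 0" and S: "S \<noteq> 0" and U: "U \<noteq> 0" and D: "A*M - Q^2 \<noteq> 0"
    and W: "1 - A*M/Q*U^2 \<noteq> 0"
  shows "- (Q^2 - M*S)*(Q^2*S - M) / (Q^2*S*(A*M - Q^2)) - (1 - M*U/Q^2)*(1 - M*U/Q) / (1 - A*M/Q*U^2)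
    = M/(A*M - Q^2) * ((1 - A*U)*(1 - M*U/Q^2)*(1 - Q*U^2) / (1 - A*M/Q*U^2) - (1 - U/S)*(1 - S*U)) / U"
    (is "?rho - ?R / ?W = ?c * (?Y / ?W - ?Z) / U")
proof -
  let ?K = "1 / (Q^3*S*(A*M - Q^2))"
  have "U * (?rho * ?W - ?R)
      = ?K * (U*(-(Q^2-M*S)*(Q^2*S-M)*(Q-A*M*U^2) - S*(A*M-Q^2)*(Q^2-M*U)*(Q-M*U)))"
    using Q S D by (simp add: field_simps power2_eq_square power3_eq_cube)
  also have "U*(-(Q^2-M*S)*(Q^2*S-M)*(Q-A*M*U^2) - S*(A*M-Q^2)*(Q^2-M*U)*(Q-M*U))
      = M*((1-A*U)*(Q^2-M*U)*(1-Q*U^2)*Q*S - (S-U)*(1-S*U)*(Q-A*M*U^2)*Q^2)"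
    by (simp add: algebra_simps power2_eq_square)
  also have "?K * \<dots> = ?c * (?Y - ?Z * ?W)"
    using Q S D by (simp add: field_simps power2_eq_square power3_eq_cube)
  finally have "U * (?rho * ?W - ?R) = ?c * (?Y - ?Z * ?W)" .
  moreover have "rho - R/W' = c * (Y/W' - Z) / U"
    if "U * (rho * W' - R) = c * (Y - Z * W')" "W' \<noteq> 0" for rho R W' c Y Z :: 'a
  proof -
    have "rho - R/W' = (rho * W' - R) / W'" using that(2) by (simp add: field_simps)
    also have "\<dots> = U * (rho * W' - R) / (U * W')" using U by simp
    also have "\<dots> = c * ((Y - Z * W') / W') / U" unfolding that(1) by simp
    also have "(Y - Z * W') / W' = Y/W' - Z" using that(2) by (simp add: diff_divide_distrib)
    finally show ?thesis .
  qed
  ultimately show ?thesis using W by blast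
qed

locale generic_over =
  fixes A Q :: "'a::field"
  assumes power_inj: "inj (\<lambda>n::nat. Q ^ n)"
    and generic: "\<And>e::int. A * Q powi e \<noteq> 1"
begin

lemma Q_nonzero: "Q \<noteq> 0"
  using injD[OF power_inj, of 1 2] by auto

lemma power_eq_one_iff: "Q ^ n = 1 \<longleftrightarrow> n = 0"
  using injD[OF power_inj, of n 0] by auto

lemma powi_eq_one_iff: "Q powi e = 1 \<longleftrightarrow> e = 0"
proof (cases "e \<ge> 0")
  case True
  then show ?thesis using power_eq_one_iff[of "nat e"] by (simp add: power_int_def)
next
  case False
  then show ?thesis using power_eq_one_iff[of "nat (- e)"]
    by (simp add: power_int_def) (metis inverse_eq_1_iff power_inverse)
qed

lemma generic_power: "A * Q ^ i \<noteq> Q ^ j"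
proof
  assume "A * Q ^ i = Q ^ j"
  then have "A * Q powi (int i - int j) = 1"
    using Q_nonzero by (simp add: power_int_diff)
  with generic show False by blast
qed

lemma qpochhammer_Q_nonzero: "qpochhammer Q Q m \<noteq> 0"
  by (rule qpochhammer_nonzero) (simp flip: power_Suc add: power_eq_one_iff)

lemma qpochhammer_generic_nonzero: "qpochhammer (A * Q powi e) (Q^2) m \<noteq> 0"
proof (rule qpochhammer_nonzero)
  fix i
  have "(Q^2)^i = Q powi int (2*i)"
    by (simp only: power_int_of_nat power_mult)
  then have "A * Q powi e * (Q^2)^i = A * Q powi (e + int (2*i))"
    using Q_nonzero by (simp add: power_int_add)
  then show "A * Q powi e * (Q^2)^i \<noteq> 1" using generic by metis
qed

lemma terminating_parameter_ne:
  fixes m :: nat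
  defines "M \<equiv> Q powi (- int m)"
  shows "M / Q^2 \<noteq> 1" "M / Q \<noteq> 1" "A * M / Q \<noteq> 1" "A * M \<noteq> Q^2"
proof -
  have Q: "Q \<noteq> 0" by (rule Q_nonzero)
  have "M / Q^i = Q powi (- int m - int i)" for i
    using Q unfolding M_def by (simp add: power_int_diff)
  from this[of 2] this[of 1] show "M / Q^2 \<noteq> 1" "M / Q \<noteq> 1"
    by (simp_all add: powi_eq_one_iff)
  have "A * M / Q = A * Q powi (- int m - 1)" using Q unfolding M_def by (simp add: power_int_diff)
  then show "A * M / Q \<noteq> 1" using generic by metis
  show "A * M \<noteq> Q^2"
  proof
    assume "A * M = Q^2"
    then have "A * Q^0 = Q^(m+2)" using Q by (simp add: M_def power_int_minus field_simps power2_eq_square)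
    with generic_power show False by blast
  qed
qed

lemma one_minus_generic_ne_0: "1 - A * Q powi (- int m) / Q * (Q ^ k)^2 \<noteq> 0"
proof
  assume "1 - A * Q powi (- int m) / Q * (Q ^ k)^2 = 0"
  then have "A * Q^(2*k) = Q^(m+1)"
    using Q_nonzero by (simp add: power_int_minus field_simps flip: power_mult)
  with generic_power show False by blast
qed

lemma qsum_term_lower:
  fixes m s j :: nat
  defines "M \<equiv> Q powi (- int m)" and "U \<equiv> Q ^ (s + j)"
  shows "qsum_term A M Q s j = qsum_term A (M / Q^2) Q s j
     * ((1 - M*U/Q^2) * (1 - M*U/Q) * (1 - A*M/Q) / ((1 - M/Q^2) * (1 - M/Q) * (1 - A*M/Q*U^2)))"
proof -
  define k where "k = s + j"
  have Q: "Q \<noteq> 0" by (rule Q_nonzero)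
  have K1: "(1 - M/Q^2) * (1 - M/Q) \<noteq> 0"
    using terminating_parameter_ne(1,2)[of m] unfolding M_def by (metis eq_iff_diff_eq_0 mult_eq_0_iff)
  have W: "1 - A*M/Q*U^2 \<noteq> 0" unfolding M_def U_def by (rule one_minus_generic_ne_0)
  have K2: "1 - A*M/Q \<noteq> 0"
    using terminating_parameter_ne(3)[of m] unfolding M_def by (metis eq_iff_diff_eq_0)
  have "A * (M / Q^2) * Q = A * Q powi (- int m - 1)"
    using Q unfolding M_def by (simp add: power_int_diff power2_eq_square)
  then have Y: "qpochhammer (A * (M / Q^2) * Q) (Q^2) k \<noteq> 0"
    using qpochhammer_generic_nonzero by metis
  have "qpochhammer (M/Q^2) Q (Suc (Suc k)) = qpochhammer (M/Q^2) Q k * ((1 - M*U/Q^2) * (1 - M*U/Q))"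
    using Q by (simp add: qpochhammer_Suc U_def k_def power2_eq_square field_simps)
  moreover have "qpochhammer (M/Q^2) Q (Suc (Suc k)) = (1 - M/Q^2) * (1 - M/Q) * qpochhammer M Q k"
    using Q by (simp add: qpochhammer_Suc_shift power2_eq_square)
  ultimately have P1: "qpochhammer M Q k = qpochhammer (M/Q^2) Q k * ((1 - M*U/Q^2) * (1 - M*U/Q))
      / ((1 - M/Q^2) * (1 - M/Q))"
    using K1 by (simp add: field_simps)
  have "U^2 = (Q^2)^k" unfolding U_def k_def by (simp flip: power_mult add: mult.commute)
  then have "qpochhammer (A*M/Q) (Q^2) (Suc k) = qpochhammer (A*M/Q) (Q^2) k * (1 - A*M/Q*U^2)"
    by (simp add: qpochhammer_Suc)
  moreover have "qpochhammer (A*M/Q) (Q^2) (Suc k) = (1 - A*M/Q) * qpochhammer (A*M*Q) (Q^2) k"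
    using Q by (simp add: qpochhammer_Suc_shift power2_eq_square mult.assoc)
  moreover have "A * (M / Q^2) * Q = A * M / Q" using Q by (simp add: power2_eq_square)
  ultimately have P2: "qpochhammer (A*M*Q) (Q^2) k
      = qpochhammer (A * (M / Q^2) * Q) (Q^2) k * (1 - A*M/Q*U^2) / (1 - A*M/Q)"
    using K2 by (simp add: field_simps)
  have rearrange: "a * (x * R / K) * c * V / (d * (y * W' / K')) = a * x * c * V / (d * y) * (R * K' / (K * W'))"
    if "K \<noteq> 0" "W' \<noteq> 0" "K' \<noteq> 0" "y \<noteq> 0" for a x R K c V d y W' K' :: 'a
    using that by (simp add: field_simps)
  show ?thesis
    unfolding qsum_term_def k_def[symmetric] P1 P2 using K1 W K2 Y by (rule rearrange)
qed

definition lowering_factor :: "'a \<Rightarrow> 'a" where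
  "lowering_factor M = (1 - A*M/Q) / ((1 - M/Q^2) * (1 - M/Q))"

definition recurrence_coefficient :: "'a \<Rightarrow> nat \<Rightarrow> 'a" where
  "recurrence_coefficient M s =
     - (Q^2 - M*Q^s) * (Q^2*Q^s - M) / (Q^2*Q^s*(A*M - Q^2)) * lowering_factor M"

definition certificate :: "'a \<Rightarrow> nat \<Rightarrow> nat \<Rightarrow> 'a" where
  "certificate M s j = M / (A*M - Q^2) * lowering_factor M * qsum_term A (M/Q^2) Q s j
     * (1 - Q^j) * (1 - Q^(2*s+j)) / Q^(s+j)"

lemma certificate_eq:
  fixes m s j :: nat
  defines "M \<equiv> Q powi (- int m)" and "U \<equiv> Q ^ (s + j)"
  shows "certificate M s j
    = M / (A*M - Q^2) * (lowering_factor M * qsum_term A (M/Q^2) Q s j) * ((1 - U/Q^s) * (1 - Q^s*U)) / U"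
proof -
  have "Q^(2*s+j) = Q^s*U" "Q^j = U/Q^s" using Q_nonzero by (simp_all add: U_def power_add mult_2)
  then show ?thesis unfolding certificate_def U_def by (simp add: mult_ac)
qed

lemma certificate_Suc_eq:
  fixes m s j :: nat
  defines "M \<equiv> Q powi (- int m)" and "U \<equiv> Q ^ (s + j)"
  shows "certificate M s (Suc j) = M / (A*M - Q^2) * (lowering_factor M * qsum_term A (M/Q^2) Q s j)
    * ((1 - A*U) * (1 - M*U/Q^2) * (1 - Q*U^2) / (1 - A*M/Q*U^2)) / U"
proof -
  have Q: "Q \<noteq> 0" by (rule Q_nonzero)
  have "A * (M/Q^2) * Q = A * Q powi (- int m - 1)"
    using Q unfolding M_def by (simp add: power_int_diff power2_eq_square)
  then have ratio: "qsum_term A (M/Q^2) Q s (Suc j) = qsum_term A (M/Q^2) Q s j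
      * ((1 - A*U) * (1 - M/Q^2*U) * (1 - Q*U^2) * Q / ((1 - Q^Suc j) * (1 - Q*Q^(2*s+j)) * (1 - A*(M/Q^2)*Q*U^2)))"
    unfolding U_def by (intro qsum_term_ratio qpochhammer_Q_nonzero) (metis qpochhammer_generic_nonzero)
  have nz: "1 - Q^Suc j \<noteq> 0" "1 - Q*Q^(2*s+j) \<noteq> 0"
    using power_eq_one_iff[of "Suc j"] power_eq_one_iff[of "Suc (2*s+j)"] by auto
  have e: "A*(M/Q^2)*Q*U^2 = A*M/Q*U^2" "M/Q^2*U = M*U/Q^2" using Q by (simp_all add: power2_eq_square)
  have "certificate M s (Suc j) = M / (A*M - Q^2) * lowering_factor M * qsum_term A (M/Q^2) Q s (Suc j)
      * (1 - Q^Suc j) * (1 - Q*Q^(2*s+j)) / (Q*U)"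
    unfolding certificate_def U_def by (simp add: mult_ac)
  also have "\<dots> = M / (A*M - Q^2) * (lowering_factor M * qsum_term A (M/Q^2) Q s j)
      * ((1 - A*U) * (1 - M*U/Q^2) * (1 - Q*U^2) / (1 - A*M/Q*U^2)) / U"
  proof -
    have "c * \<kappa> * (t * (N * Q / (x * y * w))) * x * y / (Q * U) = c * (\<kappa> * t) * (N / w) / U"
      if "x \<noteq> 0" "y \<noteq> 0" for c \<kappa> t N x y w :: 'a
      using that Q by (simp add: field_simps)
    from this[OF nz] show ?thesis unfolding ratio e .
  qed
  finally show ?thesis .
qed

lemma qsum_term_telescoping:
  fixes m s j :: nat
  defines "M \<equiv> Q powi (- int m)"
  shows "recurrence_coefficient M s * qsum_term A (M/Q^2) Q s j - qsum_term A M Q s j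
    = certificate M s (Suc j) - certificate M s j"
proof -
  define U where "U = Q ^ (s + j)"
  define T where "T = lowering_factor M * qsum_term A (M/Q^2) Q s j"
  have Q: "Q \<noteq> 0" by (rule Q_nonzero)
  have SU: "Q^s \<noteq> 0" "U \<noteq> 0" using Q by (simp_all add: U_def)
  have D: "A*M - Q^2 \<noteq> 0"
    using terminating_parameter_ne(4)[of m] unfolding M_def by (metis eq_iff_diff_eq_0)
  have W: "1 - A*M/Q*U^2 \<noteq> 0" unfolding M_def U_def by (rule one_minus_generic_ne_0)
  have "x * (R * K' / (K * W')) = K' / K * x * (R / W')" for x R K K' W' :: 'a
    by (simp add: divide_inverse ac_simps)
  then have "qsum_term A M Q s j = T * ((1 - M*U/Q^2) * (1 - M*U/Q) / (1 - A*M/Q*U^2))"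
    unfolding qsum_term_lower[of m s j, folded M_def U_def] T_def lowering_factor_def .
  then have "recurrence_coefficient M s * qsum_term A (M/Q^2) Q s j - qsum_term A M Q s j
      = T * (- (Q^2 - M*Q^s) * (Q^2*Q^s - M) / (Q^2*Q^s*(A*M - Q^2))
             - (1 - M*U/Q^2) * (1 - M*U/Q) / (1 - A*M/Q*U^2))"
    unfolding T_def recurrence_coefficient_def by (simp add: algebra_simps)
  also have "\<dots> = certificate M s (Suc j) - certificate M s j"
  proof -
    have "t * (c * (a - b) / U) = c * t * a / U - c * t * b / U" for t c a b :: 'a
      by (simp add: algebra_simps diff_divide_distrib)
    then show ?thesis
      unfolding certificate_identity[OF Q SU D W] certificate_Suc_eq[of m s j, folded M_def U_def]
        certificate_eq[of m s j, folded M_def U_def] T_def[symmetric] .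
  qed
  finally show ?thesis .
qed

lemma recurrence_coefficient_nonzero:
  assumes "s \<le> m"
  shows "recurrence_coefficient (Q powi (- int m)) s \<noteq> 0"
proof -
  define M where "M = Q powi (- int m)"
  have Q: "Q \<noteq> 0" by (rule Q_nonzero)
  have "Q^2 - M*Q^s \<noteq> 0"
  proof
    assume "Q^2 - M*Q^s = 0"
    then have "Q^(m+2) = Q^s" using Q by (simp add: M_def power_int_minus field_simps power2_eq_square)
    then show False using injD[OF power_inj] assms by fastforce
  qed
  moreover have "Q^2*Q^s - M \<noteq> 0"
  proof
    assume "Q^2*Q^s - M = 0"
    then have "Q^(m+2+s) = 1"
      using Q by (simp add: M_def power_int_minus field_simps power2_eq_square power_add)
    then show False by (simp only: power_eq_one_iff)
  qed
  moreover have "lowering_factor M \<noteq> 0"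
    unfolding lowering_factor_def using terminating_parameter_ne(1-3)[of m] by (simp add: M_def)
  ultimately show ?thesis
    unfolding recurrence_coefficient_def M_def[symmetric]
    using Q terminating_parameter_ne(4)[of m] by (simp add: M_def)
qed

lemma sum_qsum_term_step:
  assumes "s \<le> m" "m + 3 \<le> s + J" and "(\<Sum>j<J. qsum_term A (Q powi (- int m)) Q s j) = 0"
  shows "(\<Sum>j<J. qsum_term A (Q powi (- int (m + 2))) Q s j) = 0"
proof -
  define M where "M = Q powi (- int m)"
  have Q: "Q \<noteq> 0" by (rule Q_nonzero)
  have M: "M / Q^2 * Q^(m+2) = 1" "M / Q^2 = Q powi (- int (m + 2))"
    using Q unfolding M_def power_int_minus power_int_of_nat by (simp_all add: field_simps power_add power2_eq_square)
  have "(\<Sum>j<J. recurrence_coefficient M s * qsum_term A (M/Q^2) Q s j - qsum_term A M Q s j)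
      = certificate M s J - certificate M s 0"
    unfolding M_def qsum_term_telescoping by (rule sum_lessThan_telescope)
  moreover have "certificate M s 0 = 0" by (simp add: certificate_def)
  moreover have "qpochhammer (M/Q^2) Q (s + J) = 0"
    using assms(2) M(1) by (intro qpochhammer_eq_0[of "m + 2"]) auto
  then have "certificate M s J = 0" by (simp add: certificate_def qsum_term_def)
  ultimately have "recurrence_coefficient M s * (\<Sum>j<J. qsum_term A (M/Q^2) Q s j) = 0"
    using assms(3) by (simp add: M_def sum_subtractf sum_distrib_left)
  then show ?thesis
    using recurrence_coefficient_nonzero[OF assms(1)] by (simp add: M_def[symmetric] M(2))
qed

lemma qsum_term_Suc_0_eq:
  fixes s :: nat
  defines "M \<equiv> Q powi (- int (s + 1))"
  shows "qsum_term A M Q s (Suc 0) = - qsum_term A M Q s 0"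
proof -
  have Q: "Q \<noteq> 0" by (rule Q_nonzero)
  have "qsum_term A M Q s (Suc 0) = qsum_term A M Q s 0 * ((1 - A*Q^(s+0)) * (1 - M*Q^(s+0))
      * (1 - Q*(Q^(s+0))^2) * Q / ((1 - Q^Suc 0) * (1 - Q*Q^(2*s+0)) * (1 - A*M*Q*(Q^(s+0))^2)))"
  proof (rule qsum_term_ratio)
    have "A * M * Q = A * Q powi (- int s)"
      using Q unfolding M_def power_int_minus power_int_of_nat by (simp add: field_simps)
    then show "qpochhammer (A * M * Q) (Q^2) (Suc (s + 0)) \<noteq> 0"
      using qpochhammer_generic_nonzero by metis
  qed (rule qpochhammer_Q_nonzero)+
  also have "(1 - A*Q^(s+0)) * (1 - M*Q^(s+0)) * (1 - Q*(Q^(s+0))^2) * Q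
      / ((1 - Q^Suc 0) * (1 - Q*Q^(2*s+0)) * (1 - A*M*Q*(Q^(s+0))^2)) = -1"
  proof -
    have e: "A * M * Q * (Q^s)^2 = A * Q^s" "M * Q^s = 1 / Q" "Q * (Q^s)^2 = Q * Q^(2*s)"
      using Q unfolding M_def power_int_minus power_int_of_nat
      by (simp_all add: field_simps power2_eq_square mult_2 mult_2_right power_add)
    have cancel: "(1 - a) * (1 - 1/Q) * (1 - b) * Q / ((1 - Q) * (1 - b) * (1 - a)) = -1"
      if "1 - a \<noteq> 0" "1 - b \<noteq> 0" for a b :: 'a
    proof -
      have Q1: "(1 - 1/Q) * Q = - (1 - Q)" using Q by (simp add: field_simps)
      have "(1 - a) * (1 - 1/Q) * (1 - b) * Q = (1 - a) * (1 - b) * ((1 - 1/Q) * Q)"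
        by (simp only: ac_simps)
      also have "\<dots> = - ((1 - Q) * (1 - b) * (1 - a))" unfolding Q1 by (simp add: algebra_simps)
      finally have "(1 - a) * (1 - 1/Q) * (1 - b) * Q = - ((1 - Q) * (1 - b) * (1 - a))" .
      moreover have "(1 - Q) * (1 - b) * (1 - a) \<noteq> 0" using that power_eq_one_iff[of 1] by simp
      ultimately show ?thesis by (metis divide_self minus_divide_left)
    qed
    have "1 - A * Q^s \<noteq> 0" using generic_power[of s 0] by auto
    moreover have "1 - Q * Q^(2*s) \<noteq> 0"
      using power_eq_one_iff[of "Suc (2*s)"] by auto
    ultimately show ?thesis unfolding add_0_right power_Suc0_right e by (rule cancel)
  qed
  finally show ?thesis by simp
qed

text \<open>For \<open>M = Q\<^sup>-\<^sup>s\<^sup>-\<^sup>1\<close> the factor \<open>(M; Q)\<^sub>s\<^sub>+\<^sub>j\<close> kills every term with \<open>j \<ge> 2\<close>,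
  and the two remaining terms cancel.\<close>

lemma sum_qsum_term_base:
  assumes "2 \<le> J"
  shows "(\<Sum>j<J. qsum_term A (Q powi (- int (s + 1))) Q s j) = 0"
proof -
  define M where "M = Q powi (- int (s + 1))"
  have M: "M * Q^(s+1) = 1"
    using Q_nonzero unfolding M_def power_int_minus power_int_of_nat by (simp add: field_simps)
  have "(\<Sum>j<J. qsum_term A M Q s j) = (\<Sum>j<2. qsum_term A M Q s j)"
  proof (rule sum.mono_neutral_right)
    show "\<forall>j\<in>{..<J} - {..<2}. qsum_term A M Q s j = 0"
      using M by (auto simp: qsum_term_def intro!: qpochhammer_eq_0[of "s + 1"])
  qed (use assms in auto)
  also have "\<dots> = qsum_term A M Q s 0 + qsum_term A M Q s (Suc 0)"
    by (simp add: numeral_2_eq_2)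
  finally show ?thesis unfolding M_def qsum_term_Suc_0_eq by simp
qed

lemma sum_qsum_term_eq_0:
  assumes "2 * i + 2 \<le> J"
  shows "(\<Sum>j<J. qsum_term A (Q powi (- int (s + 1 + 2 * i))) Q s j) = 0"
  using assms
proof (induction i)
  case 0
  then show ?case using sum_qsum_term_base by simp
next
  case (Suc i)
  then have "(\<Sum>j<J. qsum_term A (Q powi (- int (s + 1 + 2 * i + 2))) Q s j) = 0"
    by (intro sum_qsum_term_step) auto
  then show ?case by (simp add: algebra_simps)
qed

theorem qsum_eq_0:
  assumes "s < n" "m < n" and "s \<le> m \<Longrightarrow> odd (m - s)"
  shows "qsum A (Q powi (- int m)) Q s n = 0"
proof (cases "s \<le> m")
  case False
  have "Q powi (- int m) * Q^m = 1" using Q_nonzero by (simp add: power_int_minus)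
  then show ?thesis
    using False unfolding qsum_def by (intro sum.neutral) (auto intro!: qpochhammer_eq_0[of m])
next
  case True
  with assms(3) have "odd (m - s)" by blast
  then obtain i where "m - s = 2 * i + 1" by (rule oddE)
  with True have m: "m = s + 1 + 2 * i" by simp
  with assms(2) have "2 * i + 2 \<le> n - s" by simp
  then have "(\<Sum>j<n-s. qsum_term A (Q powi (- int (s + 1 + 2 * i))) Q s j) = 0"
    by (rule sum_qsum_term_eq_0)
  then show ?thesis unfolding m qsum_eq_sum_qsum_term[OF assms(1)] .
qed

end

lemma generic_over_power:
  assumes "generic_over A Q" "d > 0"
  shows "generic_over (A * Q powi e) (Q ^ d)"
proof
  interpret generic_over A Q by fact
  show "inj (\<lambda>n::nat. (Q ^ d) ^ n)"
  proof (rule injI)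
    fix x y :: nat
    assume "(Q ^ d) ^ x = (Q ^ d) ^ y"
    then have "d * x = d * y" unfolding power_mult[symmetric] by (rule injD[OF power_inj])
    with assms(2) show "x = y" by simp
  qed
  show "A * Q powi e * (Q ^ d) powi e' \<noteq> 1" for e'
  proof -
    have "(Q ^ d) powi e' = Q powi (int d * e')"
      by (simp flip: power_int_of_nat add: power_int_mult)
    then have "A * Q powi e * (Q ^ d) powi e' = A * Q powi (e + int d * e')"
      using Q_nonzero by (simp add: power_int_add)
    then show ?thesis using generic by metis
  qed
qed

lemma qsum_power_base:
  fixes a b q :: "'a::field" and e :: int
  assumes "q \<noteq> 0"
  shows "(\<Sum>k=s..n-1. qpochhammer (a * q powi e) (q^d) k * qpochhammer (b * q powi (int d - e)) (q^d) k
           * qpochhammer (q^d) (q^(2*d)) k * q^(d*k)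
         / (qpochhammer (q^d) (q^d) (k - s) * qpochhammer (q^d) (q^d) (k + s)
            * qpochhammer (a * b * q^(2*d)) (q^(2*d)) k))
       = qsum (a * q powi e) (b * q powi (int d - e)) (q^d) s n"
proof -
  have "a * q powi e * (b * q powi (int d - e)) * q^d = a * b * q^(2*d)"
    using assms by (simp add: power_int_diff mult_2 power_add)
  moreover have "(q^d)^2 = q^(2*d)" "(q^d)^k = q^(d*k)" for k
    by (simp_all flip: power_mult add: mult.commute)
  ultimately show ?thesis by (simp only: qsum_def)
qed

section \<open>Least residues\<close>

lemma lres_of_quotient:
  assumes "quotient_of x = (p, e)" "m > 0" "coprime e (int m)"
  shows "0 \<le> lres x m \<and> lres x m < int m \<and> [e * lres x m = p] (mod int m)"
proof -
  define P where "P = (\<lambda>t. 0 \<le> t \<and> t < int m \<and> [e * t = p] (mod int m))"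
  obtain y where y: "[e * y = 1] (mod int m)" using cong_solve_coprime_int[OF assms(3)] by blast
  define t0 where "t0 = (y * p) mod int m"
  have "[e * t0 = e * (y * p)] (mod int m)" unfolding t0_def by (simp add: cong_def mod_mult_right_eq)
  also have "[e * (y * p) = 1 * p] (mod int m)" using cong_mult[OF y cong_refl[of p]] by (simp add: mult_ac)
  finally have P0: "P t0" unfolding P_def t0_def using assms(2) by simp
  have "t = t0" if "P t" for t
  proof -
    have "[e * t = e * t0] (mod int m)" using that P0 unfolding P_def by (meson cong_sym cong_trans)
    then have "[t = t0] (mod int m)" using cong_mult_lcancel[OF assms(3)] by blast
    then show ?thesis using that P0 unfolding P_def by (meson cong_less_imp_eq_int)
  qed
  with P0 have "P (THE t. P t)" by (metis theI)
  then show ?thesis unfolding lres_def assms(1) P_def by simp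
qed

lemma lres_of_int_divide:
  fixes u v :: int
  assumes "m > 0" "v > 0" "coprime v (int m)"
  shows "0 \<le> lres (of_int u / of_int v) m \<and> lres (of_int u / of_int v) m < int m
     \<and> [v * lres (of_int u / of_int v) m = u] (mod int m)"
proof -
  obtain p e where pe: "quotient_of (of_int u / of_int v :: rat) = (p, e)" by fastforce
  have "(of_int u / of_int v :: rat) = of_int p / of_int e" using quotient_of_div[OF pe] .
  then have uepv: "u * e = p * v"
    using assms(2) quotient_of_denom_pos[OF pe] by (simp add: field_simps flip: of_int_mult)
  then have "e dvd v"
    using quotient_of_coprime[OF pe] by (metis coprime_commute coprime_dvd_mult_right_iff dvd_triv_right)
  then obtain w where w: "v = e * w" by blast
  have u: "u = p * w" using uepv quotient_of_denom_pos[OF pe] unfolding w by (simp add: mult_ac)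
  have "coprime e (int m)" using assms(3) unfolding w by simp
  from lres_of_quotient[OF pe assms(1) this]
  have "[w * (e * lres (of_int u / of_int v) m) = w * p] (mod int m)" by (blast intro: cong_scalar_left)
  with lres_of_quotient[OF pe assms(1) \<open>coprime e (int m)\<close>] show ?thesis
    by (simp add: w u mult_ac)
qed

lemma lres_neg_add_lres:
  fixes d n r :: nat
  assumes "d > 0" "n > 0" "coprime d n"
  defines "L1 \<equiv> lres (- of_nat r / of_nat d) n"
  defines "L2 \<equiv> lres ((of_nat r - of_nat d) / of_nat d) n"
  shows "0 \<le> L1 \<and> L1 < int n \<and> 0 \<le> L2 \<and> L2 < int n \<and> L1 + L2 = int n - 1"
proof -
  have c: "coprime (int d) (int n)" using assms(3) by simp
  have d: "int d > 0" using assms(1) by simp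
  have "(- of_nat r / of_nat d :: rat) = of_int (- int r) / of_int (int d)"
    "((of_nat r - of_nat d) / of_nat d :: rat) = of_int (int r - int d) / of_int (int d)" by simp_all
  then have P1: "0 \<le> L1 \<and> L1 < int n \<and> [int d * L1 = - int r] (mod int n)"
    and P2: "0 \<le> L2 \<and> L2 < int n \<and> [int d * L2 = int r - int d] (mod int n)"
    unfolding L1_def L2_def using lres_of_int_divide[OF assms(2) d c] by presburger+
  have "[int d * (L1 + L2 + 1) = int d * 0] (mod int n)"
    using cong_add[OF cong_add[OF conjunct2[OF conjunct2[OF P1]] conjunct2[OF conjunct2[OF P2]]]
        cong_refl[of "int d"]] by (simp add: algebra_simps)
  then have "[L1 + L2 + 1 = 0] (mod int n)" using cong_mult_lcancel[OF c] by blast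
  then have "int n dvd L1 + L2 + 1" by (simp add: cong_0_iff)
  then obtain t where t: "L1 + L2 + 1 = int n * t" by blast
  with P1 P2 have "0 < int n * t" "int n * t < int n * 2" by linarith+
  then have "t = 1" using assms(2) by (simp add: zero_less_mult_iff mult_less_cancel_left)
  with P1 P2 t show ?thesis by simp
qed

section \<open>Evaluating fractions along a ring homomorphism\<close>

locale ring_to_field_hom =
  fixes \<phi> :: "'r::idom \<Rightarrow> 'k::field"
  assumes hom_add: "\<phi> (x + y) = \<phi> x + \<phi> y"
    and hom_mult: "\<phi> (x * y) = \<phi> x * \<phi> y"
    and hom_one: "\<phi> 1 = 1"
begin

lemma hom_zero: "\<phi> 0 = 0"
proof -
  have "\<phi> 0 + \<phi> 0 = \<phi> 0 + 0" using hom_add[of 0 0] by simp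
  then show ?thesis by (simp only: add_left_cancel)
qed

lemma hom_nonzero_imp_nonzero: "\<phi> y \<noteq> 0 \<Longrightarrow> y \<noteq> 0"
  using hom_zero by auto

lemma hom_uminus: "\<phi> (- x) = - \<phi> x"
  using hom_add[of x "- x"] hom_zero by (simp add: eq_neg_iff_add_eq_0 add.commute)

lemma prime_elem_kernel_generator:
  assumes kernel: "\<And>z. \<phi> z = 0 \<longleftrightarrow> N dvd z" and "N \<noteq> 0"
  shows "prime_elem N"
proof -
  have "\<not> N dvd 1" using kernel[of 1] hom_one by simp
  moreover have "N dvd a \<or> N dvd b" if "N dvd a * b" for a b
    using that by (simp flip: kernel add: hom_mult)
  ultimately show ?thesis unfolding prime_elem_def using assms(2) by blast
qed

definition evaluates_to :: "'r fract \<Rightarrow> 'k \<Rightarrow> bool" where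
  "evaluates_to z w \<longleftrightarrow> (\<exists>x y. \<phi> y \<noteq> 0 \<and> z = Fract x y \<and> w = \<phi> x / \<phi> y)"

lemma evaluates_to_to_fract: "evaluates_to (to_fract x) (\<phi> x)"
  unfolding evaluates_to_def to_fract_def by (intro exI[of _ x] exI[of _ 1]) (simp add: hom_one)

lemma evaluates_to_0: "evaluates_to 0 0"
  using evaluates_to_to_fract[of 0] by (simp add: hom_zero)

lemma evaluates_to_1: "evaluates_to 1 1"
  using evaluates_to_to_fract[of 1] by (simp add: hom_one)

lemma evaluates_to_add:
  assumes "evaluates_to z w" "evaluates_to z' w'"
  shows "evaluates_to (z + z') (w + w')"
proof -
  obtain x y x' y' where xy: "\<phi> y \<noteq> 0" "z = Fract x y" "w = \<phi> x / \<phi> y"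
    "\<phi> y' \<noteq> 0" "z' = Fract x' y'" "w' = \<phi> x' / \<phi> y'"
    using assms unfolding evaluates_to_def by blast
  show ?thesis unfolding evaluates_to_def
    by (rule exI[of _ "x * y' + x' * y"], rule exI[of _ "y * y'"])
      (use xy hom_nonzero_imp_nonzero in \<open>auto simp: hom_add hom_mult add_frac_eq\<close>)
qed

lemma evaluates_to_mult:
  assumes "evaluates_to z w" "evaluates_to z' w'"
  shows "evaluates_to (z * z') (w * w')"
proof -
  obtain x y x' y' where xy: "\<phi> y \<noteq> 0" "z = Fract x y" "w = \<phi> x / \<phi> y"
    "\<phi> y' \<noteq> 0" "z' = Fract x' y'" "w' = \<phi> x' / \<phi> y'"
    using assms unfolding evaluates_to_def by blast
  show ?thesis unfolding evaluates_to_def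
    by (rule exI[of _ "x * x'"], rule exI[of _ "y * y'"]) (use xy hom_nonzero_imp_nonzero in \<open>auto simp: hom_mult\<close>)
qed

lemma evaluates_to_uminus:
  assumes "evaluates_to z w"
  shows "evaluates_to (- z) (- w)"
proof -
  obtain x y where xy: "\<phi> y \<noteq> 0" "z = Fract x y" "w = \<phi> x / \<phi> y"
    using assms unfolding evaluates_to_def by blast
  show ?thesis unfolding evaluates_to_def
    by (rule exI[of _ "- x"], rule exI[of _ y]) (use xy in \<open>simp add: hom_uminus\<close>)
qed

lemma evaluates_to_diff: "evaluates_to z w \<Longrightarrow> evaluates_to z' w' \<Longrightarrow> evaluates_to (z - z') (w - w')"
  unfolding diff_conv_add_uminus by (intro evaluates_to_add evaluates_to_uminus)

lemma evaluates_to_inverse: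
  assumes "evaluates_to z w" "w \<noteq> 0"
  shows "evaluates_to (inverse z) (inverse w)"
proof -
  obtain x y where xy: "\<phi> y \<noteq> 0" "z = Fract x y" "w = \<phi> x / \<phi> y"
    using assms(1) unfolding evaluates_to_def by blast
  show ?thesis unfolding evaluates_to_def
    by (rule exI[of _ y], rule exI[of _ x]) (use xy assms(2) in \<open>auto simp: hom_zero\<close>)
qed

lemma evaluates_to_divide:
  "evaluates_to z w \<Longrightarrow> evaluates_to z' w' \<Longrightarrow> w' \<noteq> 0 \<Longrightarrow> evaluates_to (z / z') (w / w')"
  unfolding divide_inverse by (intro evaluates_to_mult evaluates_to_inverse)

lemma evaluates_to_power: "evaluates_to z w \<Longrightarrow> evaluates_to (z ^ n) (w ^ n)"
  by (induction n) (simp_all add: evaluates_to_1 evaluates_to_mult)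

lemma evaluates_to_power_int:
  "evaluates_to z w \<Longrightarrow> w \<noteq> 0 \<Longrightarrow> evaluates_to (z powi e) (w powi e)"
  unfolding power_int_def
  by (auto intro!: evaluates_to_power evaluates_to_inverse simp flip: power_inverse)

lemma evaluates_to_qpochhammer:
  "evaluates_to x x' \<Longrightarrow> evaluates_to y y' \<Longrightarrow> evaluates_to (qpochhammer x y m) (qpochhammer x' y' m)"
  by (induction m)
    (simp_all add: qpochhammer_Suc evaluates_to_1 evaluates_to_mult evaluates_to_diff evaluates_to_power)

lemma evaluates_to_sum:
  "(\<And>i. i \<in> I \<Longrightarrow> evaluates_to (f i) (g i)) \<Longrightarrow> evaluates_to (sum f I) (sum g I)"
  by (induction I rule: infinite_finite_induct) (simp_all add: evaluates_to_0 evaluates_to_add)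

lemma evaluates_to_qsum:
  assumes "evaluates_to A A'" "evaluates_to B B'" "evaluates_to Q Q'"
    and "\<And>j. qpochhammer Q' Q' j \<noteq> 0" "\<And>k. qpochhammer (A' * B' * Q') (Q'^2) k \<noteq> 0"
  shows "evaluates_to (qsum A B Q s n) (qsum A' B' Q' s n)"
  unfolding qsum_def
  by (intro evaluates_to_sum evaluates_to_divide evaluates_to_mult evaluates_to_qpochhammer
      evaluates_to_power assms) (simp add: assms(4,5))

lemma evaluates_qsum_to_0:
  assumes "evaluates_to A (Q' powi (- int m))" "evaluates_to B B'" "evaluates_to Q Q'"
    and "generic_over B' Q'" and "s < n" "m < n" "s \<le> m \<Longrightarrow> odd (m - s)"
  shows "evaluates_to (qsum A B Q s n) 0"
proof -
  interpret generic_over B' Q' by fact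
  have "Q' powi (- int m) * B' * Q' = B' * Q' powi (1 - int m)"
    using Q_nonzero by (simp add: power_int_diff power_int_minus field_simps)
  then have "evaluates_to (qsum A B Q s n) (qsum (Q' powi (- int m)) B' Q' s n)"
    using assms(1-3) qpochhammer_Q_nonzero qpochhammer_generic_nonzero
    by (intro evaluates_to_qsum) metis+
  also have "qsum (Q' powi (- int m)) B' Q' s n = 0"
    unfolding qsum_commute[of _ B'] using assms(5-7) by (rule qsum_eq_0)
  finally show ?thesis .
qed

end

lemma kernel_generator_dvd_numerator:
  fixes \<phi> :: "'r::{factorial_ring_gcd,semiring_gcd_mult_normalize} \<Rightarrow> 'k::field"
  assumes "ring_to_field_hom \<phi>" and kernel: "\<And>z. \<phi> z = 0 \<longleftrightarrow> N dvd z" and "N \<noteq> 0"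
    and "ring_to_field_hom.evaluates_to \<phi> S 0"
  shows "N dvd fst (quot_of_fract S)" "\<not> N dvd snd (quot_of_fract S)"
proof -
  interpret ring_to_field_hom \<phi> by fact
  define X Y where "X = fst (quot_of_fract S)" and "Y = snd (quot_of_fract S)"
  have prime: "prime_elem N" using assms(2,3) by (rule prime_elem_kernel_generator)
  obtain x y where xy: "\<phi> y \<noteq> 0" "S = Fract x y" "\<phi> x = 0"
    using assms(4) unfolding evaluates_to_def by auto
  have "Fract x y = Fract X Y" unfolding X_def Y_def xy(2)[symmetric] by simp
  then have "x * Y = X * y" using xy(1) hom_nonzero_imp_nonzero by (simp add: eq_fract Y_def)
  then have "N dvd X * y" using xy(3) kernel by (metis dvd_mult2)
  moreover have "\<not> N dvd y" using xy(1) kernel by blast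
  ultimately show "N dvd X" unfolding X_def using prime prime_elem_dvd_mult_iff by blast
  moreover have "coprime X Y" unfolding X_def Y_def by (rule coprime_quot_of_fract)
  ultimately show "\<not> N dvd Y" unfolding Y_def
    using prime by (meson coprime_common_divisor prime_elem_def)
qed

lemma fract_numerator_dvd_kernel_generators:
  fixes \<phi>\<^sub>1 :: "'r::{factorial_ring_gcd,semiring_gcd_mult_normalize} \<Rightarrow> 'k\<^sub>1::field"
    and \<phi>\<^sub>2 :: "'r \<Rightarrow> 'k\<^sub>2::field"
  assumes "ring_to_field_hom \<phi>\<^sub>1" "ring_to_field_hom \<phi>\<^sub>2"
    and "\<And>z. \<phi>\<^sub>1 z = 0 \<longleftrightarrow> N\<^sub>1 dvd z" "\<And>z. \<phi>\<^sub>2 z = 0 \<longleftrightarrow> N\<^sub>2 dvd z"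
    and "N\<^sub>1 \<noteq> 0" "N\<^sub>2 \<noteq> 0" "\<not> N\<^sub>1 dvd N\<^sub>2"
    and "ring_to_field_hom.evaluates_to \<phi>\<^sub>1 S 0" "ring_to_field_hom.evaluates_to \<phi>\<^sub>2 S 0"
  shows "\<exists>X Y. Y \<noteq> 0 \<and> S = Fract X Y \<and> N\<^sub>1 * N\<^sub>2 dvd X \<and> coprime Y (N\<^sub>1 * N\<^sub>2)"
proof (intro exI conjI)
  note dvd1 = kernel_generator_dvd_numerator[OF assms(1,3,5,8)]
  note dvd2 = kernel_generator_dvd_numerator[OF assms(2,4,6,9)]
  have prime: "prime_elem N\<^sub>1" "prime_elem N\<^sub>2"
    using ring_to_field_hom.prime_elem_kernel_generator assms(1-6) by metis+
  then have "coprime N\<^sub>1 N\<^sub>2" using assms(7) prime_elem_imp_coprime by blast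
  then show "N\<^sub>1 * N\<^sub>2 dvd fst (quot_of_fract S)" using dvd1(1) dvd2(1) by (simp add: divides_mult)
  show "coprime (snd (quot_of_fract S)) (N\<^sub>1 * N\<^sub>2)"
    using dvd1(2) dvd2(2) prime by (simp add: prime_elem_imp_coprime coprime_commute)
qed simp_all

section \<open>Substituting powers of \<open>q\<close> for \<open>a\<close> and \<open>b\<close>\<close>

lemma const_poly_power: "[:c:] ^ n = [:c ^ n:]"
  by (induction n) (simp_all add: mult.commute)

lemma to_fract_power [simp]: "to_fract (x ^ n) = to_fract x ^ n"
  by (induction n) simp_all

lemma to_fract_const_power_int:
  fixes x :: "'a::field"
  assumes "x \<noteq> 0"
  shows "to_fract [:x powi e:] = to_fract [:x:] powi e"
proof (cases "0 \<le> e")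
  case True
  then show ?thesis by (simp add: power_int_def const_poly_power flip: to_fract_power)
next
  case False
  have "to_fract [:inverse (x ^ nat (- e)):] * to_fract [:x:] ^ nat (- e) = 1"
    using assms by (simp add: const_poly_power pCons_one flip: to_fract_power to_fract_mult)
  then show ?thesis
    using False assms by (simp add: power_int_def power_inverse field_simps)
qed

lemma inj_power_X: "inj (\<lambda>n::nat. [:0, 1::'a::idom:] ^ n)"
  by (rule injI) (metis degree_linear_power)

lemma generic_over_X_const:
  fixes c :: "'a::idom"
  assumes "inj (\<lambda>n::nat. c ^ n)"
  shows "generic_over (to_fract [:0, 1:]) (to_fract [:c:])"
proof
  show "inj (\<lambda>n::nat. to_fract [:c:] ^ n)"
    using injD[OF assms] by (intro injI) (simp add: const_poly_power flip: to_fract_power)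
  show "to_fract [:0, 1:] * to_fract [:c:] powi e \<noteq> 1" for e
  proof (cases "0 \<le> e")
    case True
    have "to_fract [:0, 1:] * to_fract [:c:] powi e = to_fract [:0, c ^ nat e:]"
      using True by (simp add: power_int_def const_poly_power flip: to_fract_power to_fract_mult)
    moreover have "[:0, c ^ nat e:] \<noteq> 1" by (metis coeff_pCons_0 one_pCons zero_neq_one)
    ultimately show ?thesis by (metis to_fract_1 to_fract_eq_iff)
  next
    case False
    have "c \<noteq> 0" using injD[OF assms, of 1 2] by auto
    show ?thesis
    proof
      assume "to_fract [:0, 1:] * to_fract [:c:] powi e = 1"
      then have "to_fract [:0, 1:] = to_fract [:c ^ nat (- e):]"
        using False \<open>c \<noteq> 0\<close>
        by (simp add: power_int_def field_simps power_inverse const_poly_power flip: to_fract_power)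
      then have "coeff [:0, 1:] 1 = coeff [:c ^ nat (- e):] 1" by simp
      then show False by simp
    qed
  qed
qed

lemma map_poly_add_hom:
  assumes "\<And>x y. f (x + y) = f x + f y" "f 0 = 0"
  shows "map_poly f (p + q) = map_poly f p + map_poly f q"
  by (intro poly_eqI) (simp add: coeff_map_poly assms)

lemma map_poly_mult_hom:
  fixes f :: "'a::comm_ring_1 \<Rightarrow> 'b::comm_ring_1"
  assumes add: "\<And>x y. f (x + y) = f x + f y" and zero: "f 0 = 0" and mult: "\<And>x y. f (x * y) = f x * f y"
  shows "map_poly f (p * q) = map_poly f p * map_poly f q"
proof (induction p)
  case (pCons c p)
  have "map_poly f (pCons c p * q) = map_poly f (smult c q + pCons 0 (p * q))" by simp
  also have "\<dots> = smult (f c) (map_poly f q) + pCons 0 (map_poly f (p * q))"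
    by (simp add: map_poly_add_hom[OF add zero] map_poly_smult[OF zero mult] map_poly_pCons[of f, OF zero] zero)
  also have "\<dots> = map_poly f (pCons c p) * map_poly f q"
    by (simp add: pCons.IH map_poly_pCons[of f, OF zero])
  finally show ?case .
qed simp

lemma dvd_if_fract_poly_root:
  fixes N p :: "'a::{factorial_semiring,semiring_Gcd,ring_gcd,idom_divide,semiring_gcd_mult_normalize} poly"
  assumes "is_unit (coeff N i)" and "fract_poly N = smult u [:-z, 1:]" "u \<noteq> 0"
    and "poly (fract_poly p) z = 0"
  shows "N dvd p"
proof -
  have "content N = 1"
    using assms(1) content_dvd_coeff[of N i] by (metis dvd_unit_imp_unit is_unit_normalize normalize_content)
  moreover have "[:-z, 1:] dvd fract_poly p" using assms(4) by (simp add: poly_eq_0_iff_dvd)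
  then have "fract_poly N dvd fract_poly p" unfolding assms(2) using assms(3) by (subst smult_dvd_iff) simp
  ultimately show ?thesis by (intro fract_poly_dvdD)
qed

lemma emb_eq_to_fract: "emb = to_fract"
  by (simp add: fun_eq_iff emb_def to_fract_def)

text \<open>In \<open>mpoly3 = \<rat>[q][b][a]\<close> the outermost variable is \<open>a\<close> and the innermost is \<open>q\<close>.\<close>

definition qvar :: "rat poly poly" where "qvar = [:[:0, 1:]:]"

definition eval_a :: "nat \<Rightarrow> mpoly3 \<Rightarrow> rat poly poly fract" where
  "eval_a \<alpha> p = poly (fract_poly p) (inverse (to_fract qvar ^ \<alpha>))"

definition qfrac :: "rat poly fract" where "qfrac = to_fract [:0, 1:]"

definition eval_b_coeff :: "int \<Rightarrow> rat poly poly \<Rightarrow> rat poly fract" where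
  "eval_b_coeff \<beta> c = poly (fract_poly c) (qfrac powi (- \<beta>))"

definition eval_b :: "int \<Rightarrow> mpoly3 \<Rightarrow> rat poly fract poly fract" where
  "eval_b \<beta> p = to_fract (map_poly (eval_b_coeff \<beta>) p)"

definition b_factor :: "int \<Rightarrow> rat poly poly" where
  "b_factor \<beta> = (if 0 \<le> \<beta> then [:1, - ([:0, 1:] ^ nat \<beta>):] else [:[:0, 1:] ^ nat (- \<beta>), -1:])"

lemma var_a_eq: "var_a = to_fract [:0, 1:]"
  by (simp add: var_a_def emb_eq_to_fract)

lemma var_b_eq: "var_b = to_fract [:[:0, 1:]:]"
  by (simp add: var_b_def emb_eq_to_fract)

lemma var_q_eq: "var_q = to_fract [:qvar:]"
  by (simp add: var_q_def emb_eq_to_fract qvar_def)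

lemma qvar_power: "qvar ^ k = [:[:0, 1:] ^ k:]"
  unfolding qvar_def by (simp add: const_poly_power)

lemma ring_to_field_hom_eval_a: "ring_to_field_hom (eval_a \<alpha>)"
  by unfold_locales (simp_all add: eval_a_def fract_poly_mult)

lemma eval_a_X: "eval_a \<alpha> [:0, 1:] = inverse (to_fract qvar ^ \<alpha>)"
  by (simp add: eval_a_def map_poly_pCons)

lemma eval_a_const: "eval_a \<alpha> [:c:] = to_fract c"
  by (simp add: eval_a_def map_poly_pCons)

lemma eval_a_eq_0_iff: "eval_a \<alpha> z = 0 \<longleftrightarrow> [:1, - (qvar ^ \<alpha>):] dvd z"
proof
  assume "eval_a \<alpha> z = 0"
  then show "[:1, - (qvar ^ \<alpha>):] dvd z"
    unfolding eval_a_def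
    by (intro dvd_if_fract_poly_root[where i = 0 and u = "- (to_fract qvar ^ \<alpha>)"])
      (simp_all add: map_poly_pCons qvar_def)
next
  assume "[:1, - (qvar ^ \<alpha>):] dvd z"
  then obtain w where "z = [:1, - (qvar ^ \<alpha>):] * w" by (elim dvdE)
  moreover have "eval_a \<alpha> [:1, - (qvar ^ \<alpha>):] = 0"
    by (simp add: eval_a_def map_poly_pCons qvar_def)
  ultimately show "eval_a \<alpha> z = 0"
    by (simp only: ring_to_field_hom.hom_mult[OF ring_to_field_hom_eval_a] mult_zero_left)
qed

lemma qfrac_nonzero: "qfrac \<noteq> 0"
  by (simp add: qfrac_def)

lemma eval_b_coeff_X: "eval_b_coeff \<beta> [:0, 1:] = qfrac powi (- \<beta>)"
  by (simp add: eval_b_coeff_def map_poly_pCons)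

lemma eval_b_coeff_const: "eval_b_coeff \<beta> [:c:] = to_fract c"
  by (simp add: eval_b_coeff_def map_poly_pCons)

lemma eval_b_coeff_eq_0_iff: "eval_b_coeff \<beta> c = 0 \<longleftrightarrow> b_factor \<beta> dvd c"
proof
  assume root: "eval_b_coeff \<beta> c = 0"
  show "b_factor \<beta> dvd c"
  proof (cases "0 \<le> \<beta>")
    case True
    show ?thesis
    proof (rule dvd_if_fract_poly_root[where i = 0])
      show "fract_poly (b_factor \<beta>) = smult (- (qfrac ^ nat \<beta>)) [:- (qfrac powi (- \<beta>)), 1:]"
        using True qfrac_nonzero by (simp add: b_factor_def map_poly_pCons qfrac_def power_int_def power_inverse)
    qed (use True root qfrac_nonzero in \<open>simp_all add: b_factor_def eval_b_coeff_def\<close>)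
  next
    case False
    show ?thesis
    proof (rule dvd_if_fract_poly_root[where i = 1])
      show "fract_poly (b_factor \<beta>) = smult (-1) [:- (qfrac powi (- \<beta>)), 1:]"
        using False by (simp add: b_factor_def map_poly_pCons qfrac_def power_int_def)
    qed (use False root in \<open>simp_all add: b_factor_def eval_b_coeff_def\<close>)
  qed
next
  assume "b_factor \<beta> dvd c"
  moreover have "eval_b_coeff \<beta> (b_factor \<beta>) = 0"
    using qfrac_nonzero
    by (cases "0 \<le> \<beta>") (simp_all add: b_factor_def eval_b_coeff_def map_poly_pCons qfrac_def
        power_int_def power_inverse)
  ultimately show "eval_b_coeff \<beta> c = 0"
    by (auto elim!: dvdE simp: eval_b_coeff_def fract_poly_mult)
qed

lemma ring_to_field_hom_eval_b: "ring_to_field_hom (eval_b \<beta>)"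
proof -
  have "eval_b_coeff \<beta> (x + y) = eval_b_coeff \<beta> x + eval_b_coeff \<beta> y"
    "eval_b_coeff \<beta> (x * y) = eval_b_coeff \<beta> x * eval_b_coeff \<beta> y"
    "eval_b_coeff \<beta> 0 = 0" "eval_b_coeff \<beta> 1 = 1" for x y
    by (simp_all add: eval_b_coeff_def fract_poly_mult)
  then show ?thesis
    by unfold_locales (simp_all add: eval_b_def map_poly_add_hom map_poly_mult_hom)
qed

lemma eval_b_X: "eval_b \<beta> [:0, 1:] = to_fract [:0, 1:]"
  by (simp add: eval_b_def map_poly_pCons eval_b_coeff_def)

lemma eval_b_const: "eval_b \<beta> [:c:] = to_fract [:eval_b_coeff \<beta> c:]"
  by (simp add: eval_b_def map_poly_pCons eval_b_coeff_def)

lemma eval_b_eq_0_iff: "eval_b \<beta> z = 0 \<longleftrightarrow> [:b_factor \<beta>:] dvd z"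
proof -
  have "eval_b \<beta> z = 0 \<longleftrightarrow> (\<forall>i. eval_b_coeff \<beta> (coeff z i) = 0)"
    by (simp add: eval_b_def poly_eq_iff coeff_map_poly eval_b_coeff_def)
  also have "\<dots> \<longleftrightarrow> [:b_factor \<beta>:] dvd z"
    by (simp add: eval_b_coeff_eq_0_iff const_poly_dvd_iff)
  finally show ?thesis .
qed

lemma inj_power_qfrac: "inj (\<lambda>n::nat. qfrac ^ n)"
  using injD[OF inj_power_X] by (intro injI) (simp add: qfrac_def flip: to_fract_power)

lemma eval_a_qsum_eq_0:
  fixes d n r s L :: nat
  assumes "d > 0" "s < n" "L < n" "s \<le> L \<Longrightarrow> odd (L - s)"
  shows "ring_to_field_hom.evaluates_to (eval_a (r + d * L))
           (qsum (var_a * var_q powi int r) (var_b * var_q powi (int d - int r)) (var_q ^ d) s n) 0"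
proof -
  interpret ring_to_field_hom "eval_a (r + d * L)" by (rule ring_to_field_hom_eval_a)
  define q where "q = to_fract qvar"
  have base: "generic_over (to_fract [:0, 1:]) q"
    unfolding q_def qvar_def by (rule generic_over_X_const[OF inj_power_X])
  then have q: "q \<noteq> 0" by (rule generic_over.Q_nonzero)
  have a: "evaluates_to var_a (inverse (q ^ (r + d * L)))"
    using evaluates_to_to_fract[of "[:0, 1:]"] by (simp add: var_a_eq eval_a_X q_def)
  have b: "evaluates_to var_b (to_fract [:0, 1:])"
    using evaluates_to_to_fract[of "[:[:0, 1:]:]"] by (simp add: var_b_eq eval_a_const)
  have Q: "evaluates_to var_q q"
    using evaluates_to_to_fract[of "[:qvar:]"] by (simp add: var_q_eq eval_a_const q_def)
  have "inverse (q ^ (r + d * L)) * q powi int r = (q ^ d) powi (- int L)"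
    using q by (simp add: power_int_minus power_add power_mult)
  then have "evaluates_to (var_a * var_q powi int r) ((q ^ d) powi (- int L))"
    using evaluates_to_mult[OF a evaluates_to_power_int[OF Q q, of "int r"]] by argo
  moreover have "evaluates_to (var_b * var_q powi (int d - int r)) (to_fract [:0, 1:] * q powi (int d - int r))"
    using b Q q by (intro evaluates_to_mult evaluates_to_power_int)
  ultimately show ?thesis
    using evaluates_to_power[OF Q] generic_over_power[OF base assms(1)] assms(2-4)
    by (rule evaluates_qsum_to_0)
qed

lemma eval_b_qsum_eq_0:
  fixes d n r s L :: nat
  assumes "d > 0" "s < n" "L < n" "s \<le> L \<Longrightarrow> odd (L - s)"
  shows "ring_to_field_hom.evaluates_to (eval_b (int d - int r + int d * int L))
           (qsum (var_a * var_q powi int r) (var_b * var_q powi (int d - int r)) (var_q ^ d) s n) 0"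
proof -
  define \<beta> where "\<beta> = int d - int r + int d * int L"
  interpret ring_to_field_hom "eval_b \<beta>" by (rule ring_to_field_hom_eval_b)
  define q where "q = to_fract [:qfrac:]"
  have base: "generic_over (to_fract [:0, 1:]) q"
    unfolding q_def by (rule generic_over_X_const[OF inj_power_qfrac])
  then have q: "q \<noteq> 0" by (rule generic_over.Q_nonzero)
  have a: "evaluates_to var_a (to_fract [:0, 1:])"
    using evaluates_to_to_fract[of "[:0, 1:]"] by (simp add: var_a_eq eval_b_X)
  have b: "evaluates_to var_b (q powi (- \<beta>))"
    using evaluates_to_to_fract[of "[:[:0, 1:]:]"] qfrac_nonzero
    by (simp add: var_b_eq eval_b_const eval_b_coeff_X q_def to_fract_const_power_int)
  have Q: "evaluates_to var_q q"
    using evaluates_to_to_fract[of "[:qvar:]"]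
    by (simp add: var_q_eq eval_b_const qvar_def eval_b_coeff_const q_def qfrac_def)
  have "q powi (- \<beta>) * q powi (int d - int r) = q powi (int d * (- int L))"
    using q by (simp add: \<beta>_def flip: power_int_add)
  also have "\<dots> = (q ^ d) powi (- int L)" by (simp only: power_int_mult power_int_of_nat)
  finally have "evaluates_to (var_b * var_q powi (int d - int r)) ((q ^ d) powi (- int L))"
    using evaluates_to_mult[OF b evaluates_to_power_int[OF Q q, of "int d - int r"]] by argo
  moreover have "evaluates_to (var_a * var_q powi int r) (to_fract [:0, 1:] * q powi int r)"
    using a Q q by (intro evaluates_to_mult evaluates_to_power_int)
  ultimately have "evaluates_to (qsum (var_b * var_q powi (int d - int r)) (var_a * var_q powi int r) (var_q ^ d) s n) 0"
    using evaluates_to_power[OF Q] generic_over_power[OF base assms(1)] assms(2-4)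
    by (rule evaluates_qsum_to_0)
  then show ?thesis unfolding \<beta>_def qsum_commute[of "var_b * _"] .
qed

lemma one_minus_var_a_eq: "1 - var_a * var_q powi int \<alpha> = emb [:1, - (qvar ^ \<alpha>):]"
proof -
  have "var_a * var_q powi int \<alpha> = to_fract ([:0, 1:] * [:qvar:] ^ \<alpha>)"
    unfolding var_a_eq var_q_eq power_int_of_nat by (simp only: to_fract_mult to_fract_power)
  also have "([:0, 1:] :: mpoly3) * [:qvar:] ^ \<alpha> = [:0, qvar ^ \<alpha>:]" by (simp add: const_poly_power)
  finally have "1 - var_a * var_q powi int \<alpha> = to_fract (1 - [:0, qvar ^ \<alpha>:])" by simp
  also have "(1 :: mpoly3) - [:0, qvar ^ \<alpha>:] = [:1, - (qvar ^ \<alpha>):]" by (simp add: one_pCons)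
  finally show ?thesis by (simp add: emb_eq_to_fract)
qed

text \<open>For \<open>\<beta> < 0\<close> the factor \<open>1 - b q\<^sup>\<beta>\<close> is \<open>(q\<^sup>-\<^sup>\<beta> - b) / q\<^sup>-\<^sup>\<beta>\<close>, not a polynomial.\<close>

lemma one_minus_var_b_eq:
  obtains M where "M \<noteq> 0" "1 - var_b * var_q powi \<beta> = emb [:b_factor \<beta>:] / emb M"
proof (cases "0 \<le> \<beta>")
  case True
  define k where "k = nat \<beta>"
  have \<beta>: "\<beta> = int k" using True by (simp add: k_def)
  have "var_b * var_q powi \<beta> = to_fract ([:[:0, 1:]:] * [:qvar:] ^ k)"
    unfolding \<beta> var_b_eq var_q_eq power_int_of_nat by (simp only: to_fract_mult to_fract_power)
  also have "([:[:0, 1:]:] :: mpoly3) * [:qvar:] ^ k = [:[:0, [:0, 1:] ^ k:]:]"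
    by (simp add: const_poly_power qvar_power)
  finally have "1 - var_b * var_q powi \<beta> = to_fract (1 - [:[:0, [:0, 1:] ^ k:]:])" by simp
  also have "(1 :: mpoly3) - [:[:0, [:0, 1:] ^ k:]:] = [:b_factor \<beta>:]"
    using True by (simp add: b_factor_def k_def one_pCons)
  finally have "1 - var_b * var_q powi \<beta> = emb [:b_factor \<beta>:]" by (simp add: emb_eq_to_fract)
  then show ?thesis by (intro that[of 1]) (simp_all add: emb_eq_to_fract)
next
  case False
  define M :: mpoly3 where "M = [:[:[:0, 1:] ^ nat (- \<beta>):]:]"
  have "emb M = var_q ^ nat (- \<beta>)"
    by (simp add: M_def var_q_eq emb_eq_to_fract qvar_power const_poly_power flip: to_fract_power)
  moreover have "emb [:b_factor \<beta>:] = var_q ^ nat (- \<beta>) - var_b"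
    using False by (simp add: var_b_eq var_q_eq emb_eq_to_fract b_factor_def qvar_power
        const_poly_power flip: to_fract_power to_fract_diff)
  moreover have "var_q \<noteq> 0" by (simp add: var_q_eq qvar_def)
  ultimately show ?thesis
    using False by (intro that[of M]) (auto simp: M_def power_int_def field_simps)
qed

lemma rcong_0_if_evaluations_vanish:
  assumes "ring_to_field_hom.evaluates_to (eval_a \<alpha>) S 0"
    and "ring_to_field_hom.evaluates_to (eval_b \<beta>) S 0"
  shows "rcong S 0 ((1 - var_a * var_q powi int \<alpha>) * (1 - var_b * var_q powi \<beta>))"
proof -
  define N\<^sub>1 N\<^sub>2 :: mpoly3 where "N\<^sub>1 = [:1, - (qvar ^ \<alpha>):]" and "N\<^sub>2 = [:b_factor \<beta>:]"
  have "b_factor \<beta> \<noteq> 0" by (simp add: b_factor_def)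
  then have "N\<^sub>1 \<noteq> 0" "N\<^sub>2 \<noteq> 0" "\<not> N\<^sub>1 dvd N\<^sub>2"
    by (auto simp: N\<^sub>1_def N\<^sub>2_def eval_a_const simp flip: eval_a_eq_0_iff)
  then obtain X Y where XY: "Y \<noteq> 0" "S = Fract X Y" "N\<^sub>1 * N\<^sub>2 dvd X" "coprime Y (N\<^sub>1 * N\<^sub>2)"
    using fract_numerator_dvd_kernel_generators[OF ring_to_field_hom_eval_a ring_to_field_hom_eval_b
        eval_a_eq_0_iff eval_b_eq_0_iff _ _ _ assms] unfolding N\<^sub>1_def N\<^sub>2_def by blast
  from XY(3) obtain C where C: "X = N\<^sub>1 * N\<^sub>2 * C" by (elim dvdE)
  obtain M where M: "M \<noteq> 0" "1 - var_b * var_q powi \<beta> = emb N\<^sub>2 / emb M"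
    unfolding N\<^sub>2_def by (rule one_minus_var_b_eq)
  show ?thesis
    unfolding rcong_def one_minus_var_a_eq M(2) N\<^sub>1_def[symmetric]
  proof (intro exI conjI)
    show "emb N\<^sub>1 * (emb N\<^sub>2 / emb M) = emb (N\<^sub>1 * N\<^sub>2) / emb M"
      by (simp add: emb_eq_to_fract)
    show "S - 0 = emb N\<^sub>1 * (emb N\<^sub>2 / emb M) * emb (C * M) / emb Y"
      using M(1) XY(1) by (simp add: XY(2) C emb_eq_to_fract Fract_conv_to_fract)
  qed (use M(1) XY in auto)
qed

theorem theorem1p1:
  fixes d n r s :: nat
  assumes "d > 0" "n > 0" "r > 0" "coprime d n" "odd n"
    and "s \<le> n - 1"
    and "[int s = lres (- of_nat r / of_nat d) n + 1] (mod 2)"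
  shows "rcong
    (\<Sum>k=s..n-1.
       qpoch (var_a * var_q powi int r) (var_q ^ d) k
       * qpoch (var_b * var_q powi (int d - int r)) (var_q ^ d) k
       * qpoch (var_q ^ d) (var_q ^ (2*d)) k * var_q ^ (d*k)
       / (qpoch (var_q ^ d) (var_q ^ d) (k - s) * qpoch (var_q ^ d) (var_q ^ d) (k + s)
          * qpoch (var_a * var_b * var_q ^ (2*d)) (var_q ^ (2*d)) k))
    0
    ((1 - var_a * var_q powi (int r + int d * lres (- of_nat r / of_nat d) n))
     * (1 - var_b * var_q powi (int d - int r + int d * lres ((of_nat r - of_nat d) / of_nat d) n)))"
proof -
  define L\<^sub>1 L\<^sub>2 where "L\<^sub>1 = nat (lres (- of_nat r / of_nat d) n)"
    and "L\<^sub>2 = nat (lres ((of_nat r - of_nat d) / of_nat d) n)"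
  have L: "lres (- of_nat r / of_nat d) n = int L\<^sub>1" "lres ((of_nat r - of_nat d) / of_nat d) n = int L\<^sub>2"
    "L\<^sub>1 < n" "L\<^sub>2 < n" "L\<^sub>1 + L\<^sub>2 = n - 1"
    using lres_neg_add_lres[OF assms(1,2,4), of r] unfolding L\<^sub>1_def L\<^sub>2_def by auto
  have "s < n" using assms(2,6) by simp
  moreover have "odd (L\<^sub>1 - s)" if "s \<le> L\<^sub>1"
    using assms(7) that unfolding L(1) cong_def by presburger
  moreover have "odd (L\<^sub>2 - s)" if "s \<le> L\<^sub>2"
    using assms(5,7) L(5) that unfolding L(1) cong_def by presburger
  ultimately have "rcong (qsum (var_a * var_q powi int r) (var_b * var_q powi (int d - int r)) (var_q ^ d) s n) 0
      ((1 - var_a * var_q powi int (r + d * L\<^sub>1)) * (1 - var_b * var_q powi (int d - int r + int d * int L\<^sub>2)))"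
    using assms(1) L(3,4) by (intro rcong_0_if_evaluations_vanish eval_a_qsum_eq_0 eval_b_qsum_eq_0)
  moreover have "var_q \<noteq> 0" by (simp add: var_q_eq qvar_def)
  ultimately show ?thesis
    unfolding qpoch_eq_qpochhammer L(1,2) qsum_power_base[OF \<open>var_q \<noteq> 0\<close>]
    by (simp only: of_nat_add of_nat_mult)
qed

end
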